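(* Let $(\mathcal T,\{B_i\})$ be a tree decomposition of a graph $G$, rooted at $r$, with every node at level at most $d$, and let $\lambda\in\{1,\dots,d\}$. Define new bags $$B'_v := \bigcup\big\{B_w : w\in\mathcal T_{v\leftrightarrow r},\ w\in \mathcal T_{v\leftrightarrow\sigma(v)} \text{ or } w \text{ is a synchronization node}\big\}$$ for $v\neq r$, and $B'_r := B_r$. Then $(\mathcal T,\{B'_v\})$ has combinatorial diameter at most $3$.
   Context: Tree decomposition: tree with bags covering vertices and edges of $G$, each vertex's bags forming a connected subtree. $\mathcal T_{x\leftrightarrow y}$ is the set of nodes on the unique $x$–$y$ path in $\mathcal T$. The level of a node $v$ is the number of edges on $\mathcal T_{v\leftrightarrow r}$. A node is a synchronization node if its level is a multiple of $\lambda$. For $v\neq r$, $\sigma(v)$ is the first synchronization node on the path from $v$ to $r$, excluding $v$. Combinatorial diameter: for nodes $s,t$ consider the path $\mathcal T_{s\leftrightarrow t}$. A non-endpoint node $v$ of the current path, with its two neighbours on the current path labelled $u,w$ (in some order), is redundant if $B_v\cap B_w\subseteq B_u$; bypassing $v$ deletes $v$ and joins $u,w$. The path has combinatorial length at most $\ell$ if repeatedly bypassing redundant nodes (redundancy evaluated in the current path) yields a path with at most $\ell$ edges. The combinatorial diameter is the minimum $\delta$ such that every path $\mathcal T_{u\leftrightarrow v}$ has combinatorial length at most $\delta$ (with respect to the given bags). *)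

theory Defs
  imports Main
begin

definition is_walk :: "('n \<Rightarrow> 'n \<Rightarrow> bool) \<Rightarrow> 'n set \<Rightarrow> 'n list \<Rightarrow> bool" where
  "is_walk E S xs \<longleftrightarrow> xs \<noteq> [] \<and> set xs \<subseteq> S \<and>
     (\<forall>i. Suc i < length xs \<longrightarrow> E (xs ! i) (xs ! Suc i))"

definition is_path :: "('n \<Rightarrow> 'n \<Rightarrow> bool) \<Rightarrow> 'n set \<Rightarrow> 'n \<Rightarrow> 'n \<Rightarrow> 'n list \<Rightarrow> bool" where
  "is_path E N u v xs \<longleftrightarrow> is_walk E N xs \<and> distinct xs \<and> hd xs = u \<and> last xs = v"

definition connected_in :: "('n \<Rightarrow> 'n \<Rightarrow> bool) \<Rightarrow> 'n set \<Rightarrow> bool" where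
  "connected_in E S \<longleftrightarrow> (\<forall>u\<in>S. \<forall>v\<in>S. \<exists>xs. is_walk E S xs \<and> hd xs = u \<and> last xs = v)"

definition acyclic_graph :: "('n \<Rightarrow> 'n \<Rightarrow> bool) \<Rightarrow> 'n set \<Rightarrow> bool" where
  "acyclic_graph E N \<longleftrightarrow> \<not> (\<exists>xs. is_walk E N xs \<and> distinct xs \<and> length xs \<ge> 3 \<and> E (last xs) (hd xs))"

definition is_tree :: "'n set \<Rightarrow> ('n \<Rightarrow> 'n \<Rightarrow> bool) \<Rightarrow> bool" where
  "is_tree N E \<longleftrightarrow> finite N \<and> N \<noteq> {} \<and>
     (\<forall>u v. E u v \<longrightarrow> u \<in> N \<and> v \<in> N) \<and> (\<forall>u v. E u v \<longrightarrow> E v u) \<and> (\<forall>u. \<not> E u u) \<and>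
     connected_in E N \<and> acyclic_graph E N"

definition tpath :: "'n set \<Rightarrow> ('n \<Rightarrow> 'n \<Rightarrow> bool) \<Rightarrow> 'n \<Rightarrow> 'n \<Rightarrow> 'n list" where
  "tpath N E u v = (THE xs. is_path E N u v xs)"

definition is_tree_decomposition ::
  "'v set \<Rightarrow> ('v \<Rightarrow> 'v \<Rightarrow> bool) \<Rightarrow> 'n set \<Rightarrow> ('n \<Rightarrow> 'n \<Rightarrow> bool) \<Rightarrow> ('n \<Rightarrow> 'v set) \<Rightarrow> bool" where
  "is_tree_decomposition VG EG N E B \<longleftrightarrow>
     is_tree N E \<and> (\<forall>i\<in>N. B i \<subseteq> VG) \<and>
     (\<forall>x\<in>VG. \<exists>i\<in>N. x \<in> B i) \<and>
     (\<forall>x y. EG x y \<longrightarrow> (\<exists>i\<in>N. x \<in> B i \<and> y \<in> B i)) \<and>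
     (\<forall>x\<in>VG. connected_in E {i\<in>N. x \<in> B i})"

definition level :: "'n set \<Rightarrow> ('n \<Rightarrow> 'n \<Rightarrow> bool) \<Rightarrow> 'n \<Rightarrow> 'n \<Rightarrow> nat" where
  "level N E r v = length (tpath N E v r) - 1"

definition sync_node :: "'n set \<Rightarrow> ('n \<Rightarrow> 'n \<Rightarrow> bool) \<Rightarrow> 'n \<Rightarrow> nat \<Rightarrow> 'n \<Rightarrow> bool" where
  "sync_node N E r lam v \<longleftrightarrow> lam dvd level N E r v"

definition sigma :: "'n set \<Rightarrow> ('n \<Rightarrow> 'n \<Rightarrow> bool) \<Rightarrow> 'n \<Rightarrow> nat \<Rightarrow> 'n \<Rightarrow> 'n" where
  "sigma N E r lam v = hd (filter (sync_node N E r lam) (tl (tpath N E v r)))"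

definition new_bags :: "'n set \<Rightarrow> ('n \<Rightarrow> 'n \<Rightarrow> bool) \<Rightarrow> 'n \<Rightarrow> nat \<Rightarrow> ('n \<Rightarrow> 'v set) \<Rightarrow> 'n \<Rightarrow> 'v set" where
  "new_bags N E r lam B v =
     (if v = r then B r
      else \<Union> {B w | w. w \<in> set (tpath N E v r) \<and>
                 (w \<in> set (tpath N E v (sigma N E r lam v)) \<or> sync_node N E r lam w)})"

definition bypass_step :: "('n \<Rightarrow> 'v set) \<Rightarrow> 'n list \<Rightarrow> 'n list \<Rightarrow> bool" where
  "bypass_step B xs ys \<longleftrightarrow> (\<exists>i. 0 < i \<and> Suc i < length xs \<and>
     (B (xs ! i) \<inter> B (xs ! Suc i) \<subseteq> B (xs ! (i - 1)) \<or>
      B (xs ! i) \<inter> B (xs ! (i - 1)) \<subseteq> B (xs ! Suc i)) \<and>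
     ys = take i xs @ drop (Suc i) xs)"

definition comb_length_le :: "('n \<Rightarrow> 'v set) \<Rightarrow> 'n list \<Rightarrow> nat \<Rightarrow> bool" where
  "comb_length_le B xs l \<longleftrightarrow> (\<exists>ys. (bypass_step B)\<^sup>*\<^sup>* xs ys \<and> length ys - 1 \<le> l)"

definition comb_diameter_le :: "'n set \<Rightarrow> ('n \<Rightarrow> 'n \<Rightarrow> bool) \<Rightarrow> ('n \<Rightarrow> 'v set) \<Rightarrow> nat \<Rightarrow> bool" where
  "comb_diameter_le N E B delta \<longleftrightarrow> (\<forall>u\<in>N. \<forall>v\<in>N. comb_length_le B (tpath N E u v) delta)"

end

theory Submission
  imports Defs
begin

text \<open>
  Along the path from a node to the root, write f j for the old bag of the ancestor at level j.
  The new bag at level m is the union of the f j over the levels j \<le> m that are either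
  synchronization levels or lie at or above the last synchronization level below m.  Hence the
  new bag at a non-synchronization level is contained in the one just above it, so all such nodes
  of a vertical path can be bypassed.  For two synchronization levels b < a, an element of both
  new bags lies in a synchronization level or, because the bags containing a vertex form a
  subtree, in f b itself; either way it lies in the new bag of every node above a.  So the
  intermediate synchronization nodes can be bypassed as well, and a vertical path shrinks to its
  top, at most one synchronization node a and its bottom l, with the new bag of l contained in
  that of a.  The path between two nodes consists of two vertical paths meeting at their lowest
  common ancestor c; if both still contain such a node, c is redundant, leaving at most four
  nodes.
\<close>

section \<open>Walks and paths in trees\<close>

lemma successively_upt: "(\<And>k. m \<le> k \<Longrightarrow> Suc k < n \<Longrightarrow> P k (Suc k)) \<Longrightarrow> successively P [m..<n]"
  by (auto simp: successively_conv_nth)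

lemma last_append_tl:
  "xs \<noteq> [] \<Longrightarrow> ys \<noteq> [] \<Longrightarrow> last xs = hd ys \<Longrightarrow> last (xs @ tl ys) = last ys"
  by (cases ys) auto

lemma is_walk_iff: "is_walk E S xs \<longleftrightarrow> xs \<noteq> [] \<and> set xs \<subseteq> S \<and> successively E xs"
  by (auto simp: is_walk_def successively_conv_nth)

lemma is_walk_rev:
  assumes "\<And>u v. E u v \<Longrightarrow> E v u" and "is_walk E S xs"
  shows "is_walk E S (rev xs)"
  using assms by (auto simp: is_walk_iff elim: successively_mono)

lemma is_walk_glue:
  assumes "is_walk E S xs" and "is_walk E S ys" and "last xs = hd ys"
  shows "is_walk E S (xs @ tl ys)"
proof -
  obtain y ys' where ys: "ys = y # ys'"
    using assms(2) by (cases ys) (auto simp: is_walk_iff)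
  then show ?thesis
    using assms by (auto simp: is_walk_iff successively_append_iff successively_Cons)
qed

lemma is_walk_drop: "is_walk E S xs \<Longrightarrow> i < length xs \<Longrightarrow> is_walk E S (drop i xs)"
  using successively_append_iff[of E "take i xs" "drop i xs"]
  by (auto simp: is_walk_iff dest: in_set_dropD)

lemma path_within_walk:
  assumes "is_walk E S xs"
  shows "\<exists>ys. is_path E S (hd xs) (last xs) ys \<and> set ys \<subseteq> set xs"
  using assms
proof (induction "length xs" arbitrary: xs rule: less_induct)
  case less
  show ?case
  proof (cases "distinct xs")
    case True
    then show ?thesis using less.prems by (auto simp: is_path_def)
  next
    case False
    then obtain as y bs cs where xs: "xs = as @ [y] @ bs @ [y] @ cs"
      using not_distinct_decomp by blast
    let ?zs = "as @ [y] @ cs"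
    have "is_walk E S ?zs"
      using less.prems unfolding xs
      by (auto simp: is_walk_iff successively_append_iff successively_Cons)
    moreover have "length ?zs < length xs" "hd ?zs = hd xs" "last ?zs = last xs"
      "set ?zs \<subseteq> set xs"
      using xs by (cases as; cases cs; auto)+
    ultimately obtain ys where "is_path E S (hd ?zs) (last ?zs) ys" "set ys \<subseteq> set ?zs"
      using less.hyps by blast
    then show ?thesis
      using \<open>hd ?zs = hd xs\<close> \<open>last ?zs = last xs\<close> \<open>set ?zs \<subseteq> set xs\<close> by (metis order_trans)
  qed
qed

locale tree =
  fixes N :: "'n set" and E :: "'n \<Rightarrow> 'n \<Rightarrow> bool"
  assumes is_tree: "is_tree N E"
begin

lemma edge_sym: "E u v \<Longrightarrow> E v u"
  using is_tree by (auto simp: is_tree_def)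

text \<open>Two neighbours of a node u cannot be joined by a walk avoiding u: a shortest such walk
  would close a cycle through u.\<close>
lemma no_walk_around:
  assumes "E u a" and "E u b" and "a \<noteq> b"
    and "is_walk E (N - {u}) xs" and "hd xs = a" and "last xs = b"
  shows False
proof -
  obtain p where p: "is_path E (N - {u}) a b p"
    using path_within_walk[OF assms(4)] assms(5,6) by blast
  then obtain p' where p': "p = a # p'" "p' \<noteq> []"
    using assms(3) by (cases p) (auto simp: is_path_def is_walk_iff split: if_splits)
  have "u \<in> N"
    using assms(1) is_tree by (auto simp: is_tree_def)
  then have "is_walk E N (u # p) \<and> distinct (u # p) \<and> 3 \<le> length (u # p)
      \<and> E (last (u # p)) (hd (u # p))"
    using p p' assms(1,2) edge_sym
    by (auto simp: is_path_def is_walk_iff successively_Cons Suc_le_eq)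
  then show False
    using is_tree unfolding is_tree_def acyclic_graph_def by blast
qed

lemma path_unique: "is_path E N u v xs \<Longrightarrow> is_path E N u v ys \<Longrightarrow> xs = ys"
proof (induction xs arbitrary: u ys)
  case Nil
  then show ?case by (simp add: is_path_def is_walk_iff)
next
  case (Cons x xs)
  show ?case
  proof (cases "xs = []")
    case True
    then show ?thesis using Cons.prems
      by (cases ys) (auto simp: is_path_def is_walk_iff split: if_splits)
  next
    case xs_ne: False
    then obtain y ys' where ys: "ys = y # ys'"
      using Cons.prems by (cases ys) (auto simp: is_path_def is_walk_iff)
    have "ys' \<noteq> []"
      using Cons.prems xs_ne ys by (auto simp: is_path_def is_walk_iff)
    have walks: "is_walk E (N - {u}) xs" "is_walk E (N - {u}) ys'"
      using Cons.prems xs_ne \<open>ys' \<noteq> []\<close> ys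
      by (auto simp: is_path_def is_walk_iff successively_Cons)
    have edges: "E u (hd xs)" "E u (hd ys')"
      using Cons.prems xs_ne \<open>ys' \<noteq> []\<close> ys
      by (auto simp: is_path_def is_walk_iff successively_Cons)
    have lasts: "last xs = v" "last ys' = v"
      using Cons.prems xs_ne \<open>ys' \<noteq> []\<close> ys by (auto simp: is_path_def)
    show ?thesis
    proof (cases "hd xs = hd ys'")
      case True
      have "is_path E N (hd xs) v xs" "is_path E N (hd xs) v ys'"
        using Cons.prems ys True lasts walks by (auto simp: is_path_def is_walk_iff)
      then show ?thesis using Cons.IH Cons.prems ys by (auto simp: is_path_def)
    next
      case False
      have "is_walk E (N - {u}) (xs @ tl (rev ys'))"
        using is_walk_glue[OF walks(1) is_walk_rev[OF edge_sym walks(2)]] lasts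
        by (simp add: hd_rev)
      moreover have "hd (xs @ tl (rev ys')) = hd xs" "last (xs @ tl (rev ys')) = hd ys'"
        using xs_ne lasts \<open>ys' \<noteq> []\<close> by (auto simp: last_append_tl hd_rev last_rev)
      ultimately show ?thesis
        using no_walk_around[OF edges False] by blast
    qed
  qed
qed

lemma path_exists: "u \<in> N \<Longrightarrow> v \<in> N \<Longrightarrow> \<exists>xs. is_path E N u v xs"
  using is_tree path_within_walk unfolding is_tree_def connected_in_def by metis

lemma tpath_is_path: "u \<in> N \<Longrightarrow> v \<in> N \<Longrightarrow> is_path E N u v (tpath N E u v)"
  unfolding tpath_def by (rule theI') (use path_exists path_unique in blast)

lemma tpath_eqI: "is_path E N u v xs \<Longrightarrow> tpath N E u v = xs"
  unfolding tpath_def using path_unique by blast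

lemma set_tpath_subset_connected:
  assumes "connected_in E S" and "S \<subseteq> N" and "u \<in> S" and "v \<in> S"
  shows "set (tpath N E u v) \<subseteq> S"
proof -
  obtain xs where "is_walk E S xs" "hd xs = u" "last xs = v"
    using assms unfolding connected_in_def by blast
  then obtain ys where ys: "is_path E S u v ys" "set ys \<subseteq> S"
    using path_within_walk by (metis is_path_def is_walk_iff)
  then have "is_path E N u v ys"
    using assms(2) by (auto simp: is_path_def is_walk_iff)
  then show ?thesis using ys(2) tpath_eqI by blast
qed

end

section \<open>Root paths and ancestors\<close>

definition convex_on_levels :: "nat \<Rightarrow> (nat \<Rightarrow> 'v set) \<Rightarrow> bool" where
  "convex_on_levels L f \<longleftrightarrow> (\<forall>a b k. b \<le> k \<longrightarrow> k \<le> a \<longrightarrow> a \<le> L \<longrightarrow> f a \<inter> f b \<subseteq> f k)"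

locale rooted_tree = tree +
  fixes r :: 'n
  assumes root_in: "r \<in> N"
begin

abbreviation root_path :: "'n \<Rightarrow> 'n list" where
  "root_path v \<equiv> tpath N E v r"

abbreviation lvl :: "'n \<Rightarrow> nat" where
  "lvl v \<equiv> level N E r v"

definition ancestor :: "'n \<Rightarrow> nat \<Rightarrow> 'n" where
  "ancestor v k = root_path v ! (lvl v - k)"

lemma root_path_is_path: "v \<in> N \<Longrightarrow> is_path E N v r (root_path v)"
  using tpath_is_path root_in by blast

lemma length_root_path: "v \<in> N \<Longrightarrow> length (root_path v) = Suc (lvl v)"
  using root_path_is_path by (auto simp: level_def is_path_def is_walk_iff)

lemma root_path_drop:
  assumes "v \<in> N" and "i < length (root_path v)"
  shows "root_path (root_path v ! i) = drop i (root_path v)"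
  using root_path_is_path[OF assms(1)] assms(2)
  by (intro tpath_eqI) (auto simp: is_path_def is_walk_drop hd_drop_conv_nth)

lemma ancestor_in: "v \<in> N \<Longrightarrow> k \<le> lvl v \<Longrightarrow> ancestor v k \<in> N"
  using root_path_is_path[of v] length_root_path[of v] nth_mem[of "lvl v - k" "root_path v"]
  unfolding ancestor_def by (auto simp: is_path_def is_walk_iff)

lemma root_path_ancestor_drop:
  "v \<in> N \<Longrightarrow> k \<le> lvl v \<Longrightarrow> root_path (ancestor v k) = drop (lvl v - k) (root_path v)"
  using root_path_drop[of v "lvl v - k"] length_root_path[of v] unfolding ancestor_def by simp

lemma level_ancestor: "v \<in> N \<Longrightarrow> k \<le> lvl v \<Longrightarrow> lvl (ancestor v k) = k"
  using root_path_ancestor_drop[of v k] length_root_path[of v]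
  unfolding level_def[of N E r "ancestor v k"] by simp

lemma ancestor_eq_iff:
  "v \<in> N \<Longrightarrow> a \<le> lvl v \<Longrightarrow> b \<le> lvl v \<Longrightarrow> ancestor v a = ancestor v b \<longleftrightarrow> a = b"
  using level_ancestor by metis

lemma ancestor_level: "v \<in> N \<Longrightarrow> ancestor v (lvl v) = v"
  using root_path_is_path[of v] unfolding ancestor_def
  by (auto simp: is_path_def is_walk_iff hd_conv_nth)

lemma ancestor_0: "v \<in> N \<Longrightarrow> ancestor v 0 = r"
  using root_path_is_path[of v] length_root_path[of v] unfolding ancestor_def
  by (auto simp: is_path_def is_walk_iff last_conv_nth)

lemma level_root: "lvl r = 0"
  using tpath_eqI[of r r "[r]"] root_in by (simp add: is_path_def is_walk_iff level_def)

lemma ancestor_edge: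
  assumes "v \<in> N" and "k < lvl v"
  shows "E (ancestor v (Suc k)) (ancestor v k)"
proof -
  have "successively E (root_path v)"
    using root_path_is_path[OF assms(1)] by (simp add: is_path_def is_walk_iff)
  moreover have "Suc (lvl v - Suc k) < length (root_path v)" "Suc (lvl v - Suc k) = lvl v - k"
    using length_root_path[OF assms(1)] assms(2) by auto
  ultimately show ?thesis
    unfolding ancestor_def by (metis successively_nth)
qed

lemma tpath_ancestors:
  assumes "v \<in> N" and "b \<le> a" and "a \<le> lvl v"
  shows "tpath N E (ancestor v a) (ancestor v b) = map (ancestor v) (rev [b..<Suc a])"
    (is "_ = ?p")
proof (rule tpath_eqI)
  have "successively (\<lambda>j k. E (ancestor v k) (ancestor v j)) [b..<Suc a]"
    using assms by (intro successively_upt) (simp add: ancestor_edge)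
  then have "successively E ?p"
    by (simp only: successively_map successively_rev)
  moreover have "inj_on (ancestor v) {b..<Suc a}"
    using assms ancestor_eq_iff[of v] by (intro inj_onI) auto
  then have "distinct ?p"
    by (simp add: distinct_map del: upt_Suc)
  moreover have "set ?p \<subseteq> N"
    using assms ancestor_in by auto
  ultimately show "is_path E N (ancestor v a) (ancestor v b) ?p"
    using assms by (simp add: is_path_def is_walk_iff hd_map last_map hd_rev last_rev del: upt_Suc)
qed

lemma root_path_ancestor:
  "v \<in> N \<Longrightarrow> m \<le> lvl v \<Longrightarrow> root_path (ancestor v m) = map (ancestor v) (rev [0..<Suc m])"
  using tpath_ancestors[of v 0 m] ancestor_0 by simp

lemma convex_on_levels_ancestor_bags:
  assumes "\<And>x. connected_in E {i \<in> N. x \<in> B i}" and "v \<in> N"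
  shows "convex_on_levels (lvl v) (\<lambda>j. B (ancestor v j))"
  unfolding convex_on_levels_def
proof (intro allI impI subsetI)
  fix a b k x
  assume k: "b \<le> k" "k \<le> a" "a \<le> lvl v" and x: "x \<in> B (ancestor v a) \<inter> B (ancestor v b)"
  have "set (tpath N E (ancestor v a) (ancestor v b)) \<subseteq> {i \<in> N. x \<in> B i}"
    using x k assms ancestor_in by (intro set_tpath_subset_connected) auto
  moreover have "ancestor v k \<in> set (tpath N E (ancestor v a) (ancestor v b))"
    using k tpath_ancestors[OF assms(2)] by (simp del: upt_Suc)
  ultimately show "x \<in> B (ancestor v k)" by blast
qed

definition lca_level :: "'n \<Rightarrow> 'n \<Rightarrow> nat" where
  "lca_level s t = Max {k. k \<le> lvl s \<and> k \<le> lvl t \<and> ancestor s k = ancestor t k}"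

lemma lca_level:
  assumes "s \<in> N" and "t \<in> N"
  shows "lca_level s t \<le> lvl s" "lca_level s t \<le> lvl t"
    "ancestor s (lca_level s t) = ancestor t (lca_level s t)"
    "\<And>k. k \<le> lvl s \<Longrightarrow> k \<le> lvl t \<Longrightarrow> ancestor s k = ancestor t k \<Longrightarrow> k \<le> lca_level s t"
proof -
  let ?K = "{k. k \<le> lvl s \<and> k \<le> lvl t \<and> ancestor s k = ancestor t k}"
  have "finite ?K" by (rule finite_subset[of _ "{..lvl s}"]) auto
  moreover have "0 \<in> ?K" using assms ancestor_0 by simp
  ultimately have "lca_level s t \<in> ?K" "\<And>k. k \<in> ?K \<Longrightarrow> k \<le> lca_level s t"
    unfolding lca_level_def using Max_in Max_ge by blast+
  then show "lca_level s t \<le> lvl s" "lca_level s t \<le> lvl t"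
    "ancestor s (lca_level s t) = ancestor t (lca_level s t)"
    "\<And>k. k \<le> lvl s \<Longrightarrow> k \<le> lvl t \<Longrightarrow> ancestor s k = ancestor t k \<Longrightarrow> k \<le> lca_level s t"
    by auto
qed

lemma tpath_via_lca:
  assumes "s \<in> N" and "t \<in> N" and l: "l = lca_level s t"
  shows "tpath N E s t = map (ancestor s) (rev [l..<Suc (lvl s)])
      @ tl (rev (map (ancestor t) (rev [l..<Suc (lvl t)])))"
    (is "_ = ?U @ tl (rev ?W)")
proof (rule tpath_eqI)
  note lca = lca_level[OF assms(1,2), folded l]
  have "?U = tpath N E s (ancestor s l)" "?W = tpath N E t (ancestor t l)"
    using tpath_ancestors[OF assms(1) lca(1) order_refl] ancestor_level[OF assms(1)]
      tpath_ancestors[OF assms(2) lca(2) order_refl] ancestor_level[OF assms(2)] by simp_all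
  then have U: "is_path E N s (ancestor s l) ?U" and W: "is_path E N t (ancestor s l) ?W"
    using tpath_is_path assms(1,2) ancestor_in lca(1,2,3) by metis+
  from U have wU: "is_walk E N ?U" and lU: "last ?U = ancestor s l"
    unfolding is_path_def by blast+
  from W have wW: "is_walk E N ?W" and lW: "last ?W = ancestor s l"
    unfolding is_path_def by blast+
  have "is_walk E N (?U @ tl (rev ?W))"
    using is_walk_glue[OF wU is_walk_rev[OF edge_sym wW]] lU lW by (metis hd_rev)
  moreover have "distinct (?U @ tl (rev ?W))"
  proof -
    have tlW: "tl (rev ?W) = map (ancestor t) [Suc l..<Suc (lvl t)]"
      using lca by (simp add: rev_map upt_conv_Cons)
    have "ancestor s k \<noteq> ancestor t k'"
      if "l \<le> k" "k \<le> lvl s" "l < k'" "k' \<le> lvl t" for k k'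
      using that lca level_ancestor[OF assms(1)] level_ancestor[OF assms(2)] by (metis leD)
    then have "set ?U \<inter> set (tl (rev ?W)) = {}"
      unfolding tlW by (auto simp: less_Suc_eq_le Suc_le_eq)
    moreover have "distinct ?U" "distinct ?W"
      using U W by (simp_all only: is_path_def)
    ultimately show ?thesis
      by (simp add: distinct_tl del: upt_Suc)
  qed
  moreover have "hd (?U @ tl (rev ?W)) = s" "last (?U @ tl (rev ?W)) = t"
    using U W last_append_tl[of ?U "rev ?W"] lU lW
    by (auto simp: is_path_def is_walk_iff hd_rev last_rev simp del: upt_Suc)
  ultimately show "is_path E N s t (?U @ tl (rev ?W))"
    unfolding is_path_def by blast
qed

end

section \<open>Merged bags along a root path\<close>

text \<open>For 0 < m, sync_below lam m is the last synchronization level below m, the level of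
  \<sigma>(v) for a node v at level m; for m = 0 it is 0, so that kept_levels lam 0 = {0}
  matches B'(r) = B(r).\<close>
definition sync_below :: "nat \<Rightarrow> nat \<Rightarrow> nat" where
  "sync_below lam m = (m - 1) div lam * lam"

lemma sync_below_less: "0 < m \<Longrightarrow> sync_below lam m < m"
  unfolding sync_below_def using div_times_less_eq_dividend[of "m - 1" lam] by linarith

lemma dvd_sync_below: "lam dvd sync_below lam m"
  unfolding sync_below_def by simp

lemma le_sync_below:
  assumes "lam dvd j" and "j < m"
  shows "j \<le> sync_below lam m"
proof (cases "lam = 0")
  case False
  obtain q where j: "j = q * lam"
    using assms(1) by (metis dvdE mult.commute)
  then have "q \<le> (m - 1) div lam"
    using assms(2) False by (simp add: less_eq_div_iff_mult_less_eq)
  then show ?thesis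
    unfolding sync_below_def j by simp
qed (use assms in simp)

lemma sync_below_Suc:
  assumes "\<not> lam dvd m"
  shows "sync_below lam (Suc m) = sync_below lam m"
proof (rule antisym)
  have "sync_below lam (Suc m) \<noteq> m"
    using assms dvd_sync_below by metis
  then show "sync_below lam (Suc m) \<le> sync_below lam m"
    using sync_below_less[of "Suc m" lam] by (intro le_sync_below dvd_sync_below) simp
  have "0 < m"
    using assms by (rule contrapos_np) simp
  then show "sync_below lam m \<le> sync_below lam (Suc m)"
    using sync_below_less[of m lam] by (intro le_sync_below dvd_sync_below) simp
qed

lemma hd_filter_dvd_rev_upt:
  assumes "0 < m"
  shows "hd (filter ((dvd) lam) (rev [0..<m])) = sync_below lam m"
proof -
  let ?g = "sync_below lam m"
  have "[0..<m] = [0..<?g] @ ?g # [Suc ?g..<m]"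
    using sync_below_less[OF assms, of lam] upt_add_eq_append[of 0 ?g "m - ?g"] upt_conv_Cons[of ?g m]
    by simp
  moreover have "filter ((dvd) lam) (rev [Suc ?g..<m]) = []"
    using le_sync_below[of lam _ m] by (force simp: filter_empty_conv Suc_le_eq)
  ultimately show ?thesis
    by (simp add: dvd_sync_below)
qed

definition kept_levels :: "nat \<Rightarrow> nat \<Rightarrow> nat set" where
  "kept_levels lam m = {j. j \<le> m \<and> (sync_below lam m \<le> j \<or> lam dvd j)}"

definition merged_bag :: "nat \<Rightarrow> (nat \<Rightarrow> 'v set) \<Rightarrow> nat \<Rightarrow> 'v set" where
  "merged_bag lam f m = (\<Union>j \<in> kept_levels lam m. f j)"

lemma merged_bag_Suc_mono:
  "\<not> lam dvd m \<Longrightarrow> merged_bag lam f m \<subseteq> merged_bag lam f (Suc m)"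
  unfolding merged_bag_def kept_levels_def using sync_below_Suc[of lam m]
  by (intro UN_mono) auto

lemma merged_bag_mono:
  assumes "m \<le> m'" and "\<And>j. m \<le> j \<Longrightarrow> j < m' \<Longrightarrow> \<not> lam dvd j"
  shows "merged_bag lam f m \<subseteq> merged_bag lam f m'"
  using assms
proof (induction m' rule: dec_induct)
  case (step k)
  then show ?case
    using merged_bag_Suc_mono[of lam k f] by auto
qed simp

text \<open>An element lying in kept levels of both a and b lies either in a synchronization level,
  which every later merged bag keeps, or, by convexity, in level b itself.\<close>
lemma merged_bag_sync_Int:
  assumes "convex_on_levels L f"
    and "lam dvd a" and "lam dvd b" and "b < a" and "a \<le> L"
  shows "merged_bag lam f a \<inter> merged_bag lam f b \<subseteq> merged_bag lam f L"
proof
  fix x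
  assume "x \<in> merged_bag lam f a \<inter> merged_bag lam f b"
  then obtain i j where i: "i \<in> kept_levels lam a" "x \<in> f i"
    and j: "j \<in> kept_levels lam b" "x \<in> f j"
    unfolding merged_bag_def by blast
  have "i \<le> L" "j \<le> L"
    using i(1) j(1) assms(4,5) unfolding kept_levels_def by auto
  have sync_kept: "x \<in> merged_bag lam f L" if "lam dvd k" "k \<le> L" "x \<in> f k" for k
    using that unfolding merged_bag_def kept_levels_def by blast
  show "x \<in> merged_bag lam f L"
  proof (cases "lam dvd i \<or> lam dvd j")
    case True
    then show ?thesis
      using sync_kept i(2) j(2) \<open>i \<le> L\<close> \<open>j \<le> L\<close> by blast
  next
    case False
    then have "j \<le> b" "b \<le> i"
      using i(1) j(1) le_sync_below[OF assms(3,4)] unfolding kept_levels_def by auto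
    then have "f i \<inter> f j \<subseteq> f b"
      using assms(1) \<open>i \<le> L\<close> unfolding convex_on_levels_def by blast
    then show ?thesis
      using sync_kept[OF assms(3)] assms(4,5) i(2) j(2) by auto
  qed
qed

context rooted_tree
begin

lemma sync_node_ancestor:
  "v \<in> N \<Longrightarrow> j \<le> lvl v \<Longrightarrow> sync_node N E r lam (ancestor v j) \<longleftrightarrow> lam dvd j"
  by (simp add: sync_node_def level_ancestor)

lemma sigma_ancestor:
  assumes "v \<in> N" and "0 < m" and "m \<le> lvl v"
  shows "sigma N E r lam (ancestor v m) = ancestor v (sync_below lam m)"
proof -
  have "tl (root_path (ancestor v m)) = map (ancestor v) (rev [0..<m])"
    using root_path_ancestor[OF assms(1,3)] by simp
  moreover have "filter (sync_node N E r lam) (map (ancestor v) (rev [0..<m]))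
      = map (ancestor v) (filter ((dvd) lam) (rev [0..<m]))"
    unfolding filter_map o_def
    using assms sync_node_ancestor by (intro arg_cong[where f = "map _"] filter_cong) auto
  moreover have "filter ((dvd) lam) (rev [0..<m]) \<noteq> []"
    using assms(2) by (auto simp: filter_empty_conv)
  ultimately show ?thesis
    unfolding sigma_def using hd_filter_dvd_rev_upt[OF assms(2)] by (simp add: hd_map)
qed

lemma new_bags_ancestor:
  assumes "v \<in> N" and "m \<le> lvl v"
  shows "new_bags N E r lam B (ancestor v m) = merged_bag lam (\<lambda>j. B (ancestor v j)) m"
proof (cases "m = 0")
  case True
  then show ?thesis
    using ancestor_0[OF assms(1)]
    by (simp add: new_bags_def merged_bag_def kept_levels_def sync_below_def)
next
  case False
  let ?w = "ancestor v m" and ?g = "sync_below lam m"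
  have "?w \<noteq> r"
    using False assms level_ancestor level_root by metis
  have "set (root_path ?w) = ancestor v ` {..m}"
    using root_path_ancestor[OF assms] by (auto simp del: upt_Suc)
  moreover have "set (tpath N E ?w (sigma N E r lam ?w)) = ancestor v ` {?g..m}"
    using sigma_ancestor[OF assms(1) _ assms(2)] tpath_ancestors[OF assms(1) _ assms(2)]
      sync_below_less[of m lam] False
    by (auto simp del: upt_Suc)
  ultimately have "{w. w \<in> set (root_path ?w)
        \<and> (w \<in> set (tpath N E ?w (sigma N E r lam ?w)) \<or> sync_node N E r lam w)}
      = ancestor v ` kept_levels lam m"
    using assms ancestor_eq_iff sync_node_ancestor unfolding kept_levels_def
    by (auto 0 4)
  then show ?thesis
    using \<open>?w \<noteq> r\<close> by (simp add: new_bags_def merged_bag_def setcompr_eq_image image_image)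
qed

end

section \<open>Bypassing nodes\<close>

abbreviation bypass_steps :: "('n \<Rightarrow> 'v set) \<Rightarrow> 'n list \<Rightarrow> 'n list \<Rightarrow> bool" where
  "bypass_steps B \<equiv> (bypass_step B)\<^sup>*\<^sup>*"

lemma rtranclp_lift:
  assumes "\<And>x y. R x y \<Longrightarrow> S (f x) (f y)" and "R\<^sup>*\<^sup>* x y"
  shows "S\<^sup>*\<^sup>* (f x) (f y)"
  using assms(2) by induction (auto intro: rtranclp.rtrancl_into_rtrancl assms(1))

lemma bypass_step_Cons3: "B y \<inter> B z \<subseteq> B x \<Longrightarrow> bypass_step B (x # y # z # zs) (x # z # zs)"
  unfolding bypass_step_def by (intro exI[of _ 1]) auto

lemma bypass_stepE:
  assumes "bypass_step B xs ys"
  obtains i where "0 < i" and "Suc i < length xs"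
    and "B (xs ! i) \<inter> B (xs ! Suc i) \<subseteq> B (xs ! (i - 1))
      \<or> B (xs ! i) \<inter> B (xs ! (i - 1)) \<subseteq> B (xs ! Suc i)"
    and "ys = take i xs @ drop (Suc i) xs"
  using assms unfolding bypass_step_def by blast

lemma bypass_step_append:
  assumes "bypass_step B xs ys"
  shows "bypass_step B (xs @ zs) (ys @ zs)"
proof -
  obtain i where "0 < i" "Suc i < length xs"
    "B (xs ! i) \<inter> B (xs ! Suc i) \<subseteq> B (xs ! (i - 1))
      \<or> B (xs ! i) \<inter> B (xs ! (i - 1)) \<subseteq> B (xs ! Suc i)"
    "ys = take i xs @ drop (Suc i) xs"
    using assms by (rule bypass_stepE)
  then show ?thesis
    unfolding bypass_step_def by (intro exI[of _ i]) (auto simp: nth_append)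
qed

lemma bypass_step_prepend:
  assumes "bypass_step B xs ys"
  shows "bypass_step B (zs @ xs) (zs @ ys)"
proof -
  obtain i where i: "0 < i" "Suc i < length xs"
    "B (xs ! i) \<inter> B (xs ! Suc i) \<subseteq> B (xs ! (i - 1))
      \<or> B (xs ! i) \<inter> B (xs ! (i - 1)) \<subseteq> B (xs ! Suc i)"
    "ys = take i xs @ drop (Suc i) xs"
    using assms by (rule bypass_stepE)
  moreover have "length zs + i - 1 = length zs + (i - 1)" "Suc (length zs + i) = length zs + Suc i"
    using i(1) by auto
  ultimately show ?thesis
    unfolding bypass_step_def by (intro exI[of _ "length zs + i"]) (auto simp: nth_append)
qed

lemma bypass_step_rev:
  assumes "bypass_step B xs ys"
  shows "bypass_step B (rev xs) (rev ys)"
proof -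
  obtain i where i: "0 < i" "Suc i < length xs"
    "B (xs ! i) \<inter> B (xs ! Suc i) \<subseteq> B (xs ! (i - 1))
      \<or> B (xs ! i) \<inter> B (xs ! (i - 1)) \<subseteq> B (xs ! Suc i)"
    "ys = take i xs @ drop (Suc i) xs"
    using assms by (rule bypass_stepE)
  define j where "j = length xs - Suc i"
  have j: "0 < j" "Suc j < length (rev xs)"
    using i unfolding j_def by auto
  have "rev xs ! j = xs ! i" "rev xs ! Suc j = xs ! (i - 1)" "rev xs ! (j - 1) = xs ! Suc i"
    using i unfolding j_def by (auto simp: rev_nth Suc_diff_Suc)
  moreover have "rev ys = take j (rev xs) @ drop (Suc j) (rev xs)"
    using i unfolding j_def by (simp add: take_rev drop_rev)
  ultimately show ?thesis
    unfolding bypass_step_def using i(3) j by (intro exI[of _ j]) auto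
qed

lemma set_bypass_step: "bypass_step B xs ys \<Longrightarrow> set ys \<subseteq> set xs"
  by (auto elim!: bypass_stepE dest: in_set_takeD in_set_dropD)

lemma bypass_step_map:
  assumes "bypass_step G xs ys" and "\<And>x. x \<in> set xs \<Longrightarrow> B (h x) = G x"
  shows "bypass_step B (map h xs) (map h ys)"
proof -
  obtain i where i: "0 < i" "Suc i < length xs"
    "G (xs ! i) \<inter> G (xs ! Suc i) \<subseteq> G (xs ! (i - 1))
      \<or> G (xs ! i) \<inter> G (xs ! (i - 1)) \<subseteq> G (xs ! Suc i)"
    "ys = take i xs @ drop (Suc i) xs"
    using assms(1) by (rule bypass_stepE)
  moreover have "xs ! i \<in> set xs" "xs ! Suc i \<in> set xs" "xs ! (i - 1) \<in> set xs"
    using i(2) by auto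
  ultimately show ?thesis
    unfolding bypass_step_def using assms(2)
    by (intro exI[of _ i]) (auto simp: take_map drop_map)
qed

lemma bypass_steps_append: "bypass_steps B xs ys \<Longrightarrow> bypass_steps B (xs @ zs) (ys @ zs)"
  by (rule rtranclp_lift[where f = "\<lambda>xs. xs @ zs"]) (auto intro: bypass_step_append)

lemma bypass_steps_prepend: "bypass_steps B xs ys \<Longrightarrow> bypass_steps B (zs @ xs) (zs @ ys)"
  by (rule rtranclp_lift[where f = "\<lambda>xs. zs @ xs"]) (auto intro: bypass_step_prepend)

lemma bypass_steps_rev: "bypass_steps B xs ys \<Longrightarrow> bypass_steps B (rev xs) (rev ys)"
  by (rule rtranclp_lift[where f = rev]) (auto intro: bypass_step_rev)

lemma set_bypass_steps: "bypass_steps B xs ys \<Longrightarrow> set ys \<subseteq> set xs"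
  by (induction rule: rtranclp_induct) (auto dest: set_bypass_step)

lemma bypass_steps_map:
  assumes "bypass_steps G xs ys" and "\<And>x. x \<in> set xs \<Longrightarrow> B (h x) = G x"
  shows "bypass_steps B (map h xs) (map h ys)"
  using assms(1)
proof (induction rule: rtranclp_induct)
  case (step ys zs)
  then have "bypass_step B (map h ys) (map h zs)"
    using assms(2) set_bypass_steps by (intro bypass_step_map) blast+
  then show ?case
    using step.IH by simp
qed simp

lemma bypass_steps_filter:
  assumes "successively (\<lambda>x y. \<not> keep y \<longrightarrow> B y \<subseteq> B x) (a # xs)"
    and "xs \<noteq> [] \<Longrightarrow> keep (last xs)"
  shows "bypass_steps B (a # xs) (a # filter keep xs)"
  using assms
proof (induction xs arbitrary: a)
  case (Cons x xs)
  show ?case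
  proof (cases "keep x")
    case True
    have "bypass_steps B (x # xs) (x # filter keep xs)"
      using Cons.IH Cons.prems by (cases xs) auto
    then show ?thesis
      using True bypass_steps_prepend[of B _ _ "[a]"] by simp
  next
    case False
    then obtain y ys where xs: "xs = y # ys"
      using Cons.prems(2) by (cases xs) auto
    have "B x \<subseteq> B a"
      using Cons.prems(1) False by simp
    then have "bypass_step B (a # x # y # ys) (a # y # ys)"
      by (intro bypass_step_Cons3) blast
    moreover have "bypass_steps B (a # xs) (a # filter keep xs)"
      using Cons.IH Cons.prems \<open>B x \<subseteq> B a\<close> unfolding xs by auto
    ultimately show ?thesis
      using False xs by (simp add: converse_rtranclp_into_rtranclp)
  qed
qed simp

lemma bypass_steps_collapse:
  assumes "successively (\<lambda>x y. B x \<inter> B y \<subseteq> B a) xs" and "xs \<noteq> []"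
  shows "bypass_steps B (a # xs) [a, last xs]"
  using assms
proof (induction xs)
  case (Cons x xs)
  show ?case
  proof (cases xs)
    case (Cons y ys)
    then have "bypass_step B (a # x # y # ys) (a # y # ys)"
      using \<open>successively _ (x # xs)\<close> by (intro bypass_step_Cons3) simp
    then show ?thesis
      using Cons.IH Cons.prems \<open>xs = y # ys\<close> by (simp add: converse_rtranclp_into_rtranclp)
  qed simp
qed simp

section \<open>Reducing a vertical path\<close>

lemma successively_sync_levels:
  assumes "convex_on_levels L f"
  shows "successively (\<lambda>x y. merged_bag lam f x \<inter> merged_bag lam f y \<subseteq> merged_bag lam f L)
    (filter ((dvd) lam) (rev [j..<L]))"
proof (rule successively_if_sorted_wrt, rule sorted_wrt_mono_rel[of _ "(>)"])
  show "sorted_wrt (>) (filter ((dvd) lam) (rev [j..<L]))"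
    by (intro sorted_wrt_filter) (simp add: sorted_wrt_rev)
qed (use merged_bag_sync_Int[OF assms] in auto)

lemma bypass_steps_non_sync_levels:
  assumes "l < L"
  shows "bypass_steps (merged_bag lam f) (rev [l..<Suc L])
    (L # filter ((dvd) lam) (rev [Suc l..<L]) @ [l])"
proof -
  let ?G = "merged_bag lam f" and ?keep = "\<lambda>y. y = l \<or> lam dvd y"
  have "successively (\<lambda>x y. \<not> ?keep x \<longrightarrow> ?G x \<subseteq> ?G y) [l..<Suc L]"
    by (intro successively_upt) (simp add: merged_bag_Suc_mono)
  then have "successively (\<lambda>x y. \<not> ?keep y \<longrightarrow> ?G y \<subseteq> ?G x) (rev [l..<Suc L])"
    by (simp only: successively_rev)
  moreover have chain: "rev [l..<Suc L] = L # rev [Suc l..<L] @ [l]"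
    using assms by (simp add: upt_conv_Cons)
  ultimately have "bypass_steps ?G (rev [l..<Suc L]) (L # filter ?keep (rev [Suc l..<L] @ [l]))"
    unfolding chain by (intro bypass_steps_filter) auto
  moreover have "filter ?keep (rev [Suc l..<L] @ [l]) = filter ((dvd) lam) (rev [Suc l..<L]) @ [l]"
    by (auto intro: filter_cong)
  ultimately show ?thesis
    by simp
qed

lemma merged_bag_subset_first_sync:
  assumes "\<not> lam dvd l" and "filter ((dvd) lam) (rev [Suc l..<L]) = S @ [a]"
  shows "merged_bag lam f l \<subseteq> merged_bag lam f a"
proof (rule merged_bag_mono)
  have "sorted_wrt (>) (S @ [a])"
    unfolding assms(2)[symmetric] by (intro sorted_wrt_filter) (simp add: sorted_wrt_rev)
  then have above: "\<forall>x \<in> set S. a < x"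
    by (simp add: sorted_wrt_append)
  have a: "a \<in> set (filter ((dvd) lam) (rev [Suc l..<L]))"
    unfolding assms(2) by simp
  then show "l \<le> a"
    by simp
  show "\<not> lam dvd j" if "l \<le> j" "j < a" for j
  proof
    assume "lam dvd j"
    then have "j \<in> set (S @ [a])"
      using that assms(1) a unfolding assms(2)[symmetric] by (auto simp: le_eq_less_or_eq)
    then show False
      using that(2) above by auto
  qed
qed

lemma bypass_steps_merged_chain:
  assumes "convex_on_levels L f" and "l \<le> L"
  shows "\<exists>ys. bypass_steps (merged_bag lam f) (rev [l..<Suc L]) (ys @ [l]) \<and> length ys \<le> 2
    \<and> (length ys = 2 \<longrightarrow> merged_bag lam f l \<subseteq> merged_bag lam f (ys ! 1))"
proof (cases "l = L")
  case True
  then show ?thesis by (intro exI[of _ "[]"]) simp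
next
  case False
  let ?G = "merged_bag lam f" and ?S = "filter ((dvd) lam) (rev [Suc l..<L])"
  have filtered: "bypass_steps ?G (rev [l..<Suc L]) (L # ?S @ [l])"
    using False assms(2) by (intro bypass_steps_non_sync_levels) simp
  consider "lam dvd l" | "\<not> lam dvd l" "?S = []" | a S where "\<not> lam dvd l" "?S = S @ [a]"
    by (metis rev_exhaust)
  then show ?thesis
  proof cases
    case 1
    then have S_l: "?S @ [l] = filter ((dvd) lam) (rev [l..<L])"
      using False assms(2) by (simp add: upt_conv_Cons)
    have "bypass_steps ?G (L # ?S @ [l]) [L, last (?S @ [l])]"
      using bypass_steps_collapse[OF successively_sync_levels[OF assms(1), of lam l]]
      unfolding S_l[symmetric] by simp
    then show ?thesis
      using filtered by (intro exI[of _ "[L]"]) simp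
  next
    case 2
    then show ?thesis
      using filtered by (intro exI[of _ "[L]"]) simp
  next
    case 3
    have "bypass_steps ?G (L # ?S) [L, last ?S]"
      using bypass_steps_collapse[OF successively_sync_levels[OF assms(1), of lam "Suc l"]] 3
      by simp
    then have "bypass_steps ?G (rev [l..<Suc L]) ([L, a] @ [l])"
      using filtered bypass_steps_append[of ?G "L # ?S" "[L, a]" "[l]"] 3 by simp
    then show ?thesis
      using merged_bag_subset_first_sync[OF 3] by (intro exI[of _ "[L, a]"]) simp
  qed
qed

context rooted_tree
begin

lemma bypass_steps_ancestor_chain:
  assumes "\<And>x. connected_in E {i \<in> N. x \<in> B i}" and "v \<in> N" and "l \<le> lvl v"
  shows "\<exists>us. bypass_steps (new_bags N E r lam B) (map (ancestor v) (rev [l..<Suc (lvl v)]))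
      (us @ [ancestor v l]) \<and> length us \<le> 2
    \<and> (length us = 2 \<longrightarrow> new_bags N E r lam B (ancestor v l) \<subseteq> new_bags N E r lam B (us ! 1))"
proof -
  let ?B' = "new_bags N E r lam B" and ?f = "\<lambda>j. B (ancestor v j)"
  obtain ys where ys: "bypass_steps (merged_bag lam ?f) (rev [l..<Suc (lvl v)]) (ys @ [l])"
    "length ys \<le> 2" "length ys = 2 \<longrightarrow> merged_bag lam ?f l \<subseteq> merged_bag lam ?f (ys ! 1)"
    using bypass_steps_merged_chain[OF convex_on_levels_ancestor_bags[OF assms(1,2)] assms(3)]
    by blast
  have bags: "?B' (ancestor v k) = merged_bag lam ?f k" if "k \<in> set (rev [l..<Suc (lvl v)])" for k
    using that by (intro new_bags_ancestor[OF assms(2)]) auto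
  have "bypass_steps ?B' (map (ancestor v) (rev [l..<Suc (lvl v)])) (map (ancestor v) (ys @ [l]))"
    using bypass_steps_map[OF ys(1)] bags by blast
  moreover have "ys ! 1 \<in> set (rev [l..<Suc (lvl v)])" if "length ys = 2"
  proof -
    have "ys ! 1 \<in> set (ys @ [l])"
      using that by (simp add: nth_append)
    then show ?thesis
      using set_bypass_steps[OF ys(1)] by blast
  qed
  ultimately show ?thesis
    using ys(2,3) bags assms(3) by (intro exI[of _ "map (ancestor v) ys"]) (auto simp del: upt_Suc)
qed

end

section \<open>The combinatorial diameter of the new bags\<close>

text \<open>Once both sides are reduced, the lowest common ancestor c is redundant whenever both
  sides still have two further nodes, because B c is contained in the bag of its neighbour.\<close>
lemma comb_length_le_join:
  assumes us: "bypass_steps B us (us' @ [c])" and ws: "bypass_steps B ws (ws' @ [c])"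
    and "ws \<noteq> []" and "last ws = c"
    and "length us' \<le> 2" and "length ws' \<le> 2"
    and "length us' = 2 \<Longrightarrow> B c \<subseteq> B (us' ! 1)"
  shows "comb_length_le B (us @ tl (rev ws)) 3"
proof -
  have rev_ws: "rev ws = c # tl (rev ws)"
    using assms(3,4) by (cases "rev ws") (auto simp: hd_rev[symmetric])
  have "bypass_steps B (us @ tl (rev ws)) (us' @ c # tl (rev ws))"
    using bypass_steps_append[OF us] by simp
  also have "bypass_steps B (us' @ c # tl (rev ws)) (us' @ c # rev ws')"
    using bypass_steps_prepend[OF bypass_steps_rev[OF ws], of us'] by (subst (asm) rev_ws) simp
  finally have reduced: "bypass_steps B (us @ tl (rev ws)) (us' @ c # rev ws')" .
  show ?thesis
  proof (cases "length us' = 2 \<and> length ws' = 2")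
    case True
    then obtain x1 x2 y1 y2 where "us' = [x1, x2]" "ws' = [y1, y2]"
      by (auto simp: length_Suc_conv numeral_2_eq_2)
    moreover have "bypass_step B ([x1] @ x2 # c # y2 # [y1]) ([x1] @ x2 # y2 # [y1])"
      if "B c \<subseteq> B x2"
      using that by (intro bypass_step_prepend bypass_step_Cons3) blast
    ultimately show ?thesis
      using reduced assms(7) True unfolding comb_length_le_def
      by (intro exI[of _ "[x1, x2, y2, y1]"]) (auto intro: rtranclp.rtrancl_into_rtrancl)
  next
    case False
    then show ?thesis
      using reduced assms(5,6) unfolding comb_length_le_def by (intro exI) auto
  qed
qed

context rooted_tree
begin

theorem comb_diameter_new_bags:
  assumes "\<And>x. connected_in E {i \<in> N. x \<in> B i}"
  shows "comb_diameter_le N E (new_bags N E r lam B) 3"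
  unfolding comb_diameter_le_def
proof (intro ballI)
  fix s t
  assume s: "s \<in> N" and t: "t \<in> N"
  define l where "l = lca_level s t"
  note lca = lca_level[OF s t, folded l_def]
  obtain us where us: "bypass_steps (new_bags N E r lam B)
      (map (ancestor s) (rev [l..<Suc (lvl s)])) (us @ [ancestor s l])" "length us \<le> 2"
    "length us = 2 \<longrightarrow> new_bags N E r lam B (ancestor s l) \<subseteq> new_bags N E r lam B (us ! 1)"
    using bypass_steps_ancestor_chain[OF assms s lca(1)] by blast
  obtain ws where ws: "bypass_steps (new_bags N E r lam B)
      (map (ancestor t) (rev [l..<Suc (lvl t)])) (ws @ [ancestor s l])" "length ws \<le> 2"
    using bypass_steps_ancestor_chain[OF assms t lca(2)] lca(3) by auto
  show "comb_length_le (new_bags N E r lam B) (tpath N E s t) 3"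
    unfolding tpath_via_lca[OF s t l_def]
    using comb_length_le_join[OF us(1) ws(1) _ _ us(2) ws(2)] us(3) lca(2,3)
    by (simp add: last_map last_rev del: upt_Suc)
qed

end

theorem lemma4p3:
  fixes VG :: "'v set" and EG :: "'v \<Rightarrow> 'v \<Rightarrow> bool"
    and N :: "'n set" and E :: "'n \<Rightarrow> 'n \<Rightarrow> bool" and B :: "'n \<Rightarrow> 'v set"
    and r :: 'n and d lam :: nat
  assumes "is_tree_decomposition VG EG N E B"
    and "r \<in> N"
    and "\<forall>v\<in>N. level N E r v \<le> d"
    and "1 \<le> lam" and "lam \<le> d"
  shows "comb_diameter_le N E (new_bags N E r lam B) 3"
proof -
  interpret rooted_tree N E r
    using assms(1,2) by unfold_locales (simp_all add: is_tree_decomposition_def)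
  have "connected_in E {i \<in> N. x \<in> B i}" for x
  proof (cases "x \<in> VG")
    case False
    then have empty: "{i \<in> N. x \<in> B i} = {}"
      using assms(1) by (auto simp: is_tree_decomposition_def)
    show ?thesis
      unfolding empty connected_in_def by simp
  qed (use assms(1) in \<open>simp add: is_tree_decomposition_def\<close>)
  then show ?thesis
    by (rule comb_diameter_new_bags)
qed

end
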